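(* Let $(u,D)$ be a minimizing configuration and $U_1$ a connected component of $U=\{u>c\}$. Then there exists a unique connected component $\mathcal{F}_1$ of $\partial U_1$ such that $U_1\subset I(\mathcal{F}_1)$.
   Context: Setting: $\Omega\subset\mathbb{R}^2$ bounded domain with Lipschitz boundary, $0<A<|\Omega|$, $0<\alpha<\bar\alpha(A)$, where $\lambda(\alpha,A)=\inf\{\int_\Omega|Dw|^2+\alpha\int_E w^2: w\in H^1_0(\Omega), \|w\|_{L^2}=1, E\subset\Omega, |E|=A\}$, a minimizing configuration $(u,D)$ attains this infimum, and $\bar\alpha(A)$ is the threshold constant of Chanillo–Grieser–Imai–Kurata–Ohnishi (2000), which guarantees $\alpha<\lambda(\alpha,A)$. Known facts from that work: the minimizer $u$ is positive in $\Omega$, satisfies $-\Delta u+\alpha\chi_D u=\lambda(\alpha,A)u$, and there is $c>0$ with $D=\{u<c\}$ up to a null set. It is established in the paper that $|Du|>0$ on $\partial U_1$ and that each connected component of $\partial U_1$ is a simple closed $C^2$ curve (Jordan curve); for such a curve $\mathcal{G}$, $I(\mathcal{G})$ denotes the bounded connected component (inside region) of $\mathbb{R}^2\setminus\mathcal{G}$ given by the Jordan curve theorem. *)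

theory Defs
  imports "HOL-Analysis.Analysis"
begin

text \<open>The plane R^2 is modelled by the type complex. Points are z, the inner
product is the real inner product on complex numbers.\<close>

text \<open>Bounded domain (open, connected, bounded) with Lipschitz boundary: near every
boundary point p, after a rotation (multiplication by a unit complex number omega)
the domain is the strict supergraph of a Lipschitz function.\<close>
definition lipschitz_domain :: "complex set \<Rightarrow> bool" where
  "lipschitz_domain \<Omega> \<longleftrightarrow> open \<Omega> \<and> connected \<Omega> \<and> bounded \<Omega> \<and> \<Omega> \<noteq> {} \<and>
     (\<forall>p \<in> frontier \<Omega>. \<exists>r > 0. \<exists>\<omega>::complex. \<exists>h::real \<Rightarrow> real. \<exists>L.
        norm \<omega> = 1 \<and> lipschitz_on L UNIV h \<and>
        \<Omega> \<inter> ball p r = {z \<in> ball p r. Im (\<omega> * (z - p)) > h (Re (\<omega> * (z - p)))})"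

definition C1c_test :: "complex set \<Rightarrow> (complex \<Rightarrow> real) \<Rightarrow> (complex \<Rightarrow> complex) \<Rightarrow> bool" where
  "C1c_test \<Omega> \<phi> grad \<longleftrightarrow>
     (\<forall>x. (\<phi> has_derivative (\<lambda>h. grad x \<bullet> h)) (at x)) \<and> continuous_on UNIV grad \<and>
     compact (closure {x. \<phi> x \<noteq> 0}) \<and> closure {x. \<phi> x \<noteq> 0} \<subseteq> \<Omega>"

text \<open>w belongs to H^1_0(Omega) with weak gradient g: w is the H^1-limit of
compactly supported C^1 functions in Omega (closure of C_c^1 = closure of C_c^infinity).\<close>
definition H10 :: "complex set \<Rightarrow> (complex \<Rightarrow> real) \<Rightarrow> (complex \<Rightarrow> complex) \<Rightarrow> bool" where
  "H10 \<Omega> w g \<longleftrightarrow>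
     w \<in> borel_measurable lebesgue \<and> g \<in> borel_measurable lebesgue \<and>
     integrable lebesgue (\<lambda>x. (w x)\<^sup>2) \<and> integrable lebesgue (\<lambda>x. (norm (g x))\<^sup>2) \<and>
     (\<exists>\<phi> \<psi>. (\<forall>n. C1c_test \<Omega> (\<phi> n) (\<psi> n) \<and>
                 integrable lebesgue (\<lambda>x. (\<phi> n x - w x)\<^sup>2) \<and>
                 integrable lebesgue (\<lambda>x. (norm (\<psi> n x - g x))\<^sup>2)) \<and>
             (\<lambda>n. (\<integral>x. (\<phi> n x - w x)\<^sup>2 \<partial>lebesgue) + (\<integral>x. (norm (\<psi> n x - g x))\<^sup>2 \<partial>lebesgue))
               \<longlonglongrightarrow> 0)"

definition energy :: "real \<Rightarrow> (complex \<Rightarrow> real) \<Rightarrow> (complex \<Rightarrow> complex) \<Rightarrow> complex set \<Rightarrow> real" where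
  "energy \<alpha> w g E = (\<integral>x. (norm (g x))\<^sup>2 \<partial>lebesgue) + \<alpha> * (\<integral>x. indicator E x * (w x)\<^sup>2 \<partial>lebesgue)"

definition admissible :: "complex set \<Rightarrow> real \<Rightarrow> (complex \<Rightarrow> real) \<Rightarrow> (complex \<Rightarrow> complex) \<Rightarrow> complex set \<Rightarrow> bool" where
  "admissible \<Omega> A w g E \<longleftrightarrow> H10 \<Omega> w g \<and> (\<integral>x. (w x)\<^sup>2 \<partial>lebesgue) = 1 \<and>
     E \<in> sets lebesgue \<and> E \<subseteq> \<Omega> \<and> measure lebesgue E = A"

definition lam :: "complex set \<Rightarrow> real \<Rightarrow> real \<Rightarrow> real" where
  "lam \<Omega> \<alpha> A = Inf {energy \<alpha> w g E | w g E. admissible \<Omega> A w g E}"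

definition minimizing_configuration ::
  "complex set \<Rightarrow> real \<Rightarrow> real \<Rightarrow> (complex \<Rightarrow> real) \<Rightarrow> complex set \<Rightarrow> bool" where
  "minimizing_configuration \<Omega> \<alpha> A u D \<longleftrightarrow>
     (\<exists>g. admissible \<Omega> A u g D \<and> energy \<alpha> u g D = lam \<Omega> \<alpha> A)"

definition C2_Jordan_curve :: "complex set \<Rightarrow> bool" where
  "C2_Jordan_curve F \<longleftrightarrow>
     (\<exists>\<gamma> \<gamma>' \<gamma>''. (\<forall>t. \<gamma> (t + 1) = \<gamma> t) \<and>
        (\<forall>t. (\<gamma> has_vector_derivative \<gamma>' t) (at t)) \<and>
        (\<forall>t. (\<gamma>' has_vector_derivative \<gamma>'' t) (at t)) \<and> continuous_on UNIV \<gamma>'' \<and>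
        (\<forall>t. \<gamma>' t \<noteq> 0) \<and> inj_on \<gamma> {0..<1} \<and> \<gamma> ` {0..1} = F)"

end

theory Submission
  imports Defs
begin

text \<open>Let
  \<open>X\<close> be the unbounded component of the complement of \<open>closure U\<^sub>1\<close>. Its frontier is
  connected and lies in \<open>frontier U\<^sub>1\<close>, hence in one component \<open>F\<close>. The connected set
  \<open>outside F\<close> meets \<open>X\<close> but not \<open>frontier X\<close>, so it lies in \<open>X\<close> and misses \<open>U\<^sub>1\<close>;
  therefore \<open>U\<^sub>1 \<subseteq> inside F\<close>. If another component \<open>G\<close> also enclosed \<open>U\<^sub>1\<close>, then
  \<open>G \<subseteq> closure U\<^sub>1 \<subseteq> inside F \<union> F\<close> and symmetrically \<open>F \<subseteq> inside G\<close>; but a Jordan curve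
  is the frontier of its outside, so \<open>G \<subseteq> inside F\<close> forces \<open>F \<subseteq> outside G\<close>.\<close>

lemma C2_Jordan_curve_imp_simple_loop:
  assumes "C2_Jordan_curve F"
  obtains \<gamma> where "simple_path \<gamma>" "pathfinish \<gamma> = pathstart \<gamma>" "path_image \<gamma> = F"
proof -
  obtain \<gamma> \<gamma>' where per: "\<forall>t. \<gamma> (t + 1) = \<gamma> t"
    and deriv: "\<forall>t. (\<gamma> has_vector_derivative \<gamma>' t) (at t)"
    and inj: "inj_on \<gamma> {0..<1}" and img: "\<gamma> ` {0..1} = F"
    using assms unfolding C2_Jordan_curve_def by blast
  have loop: "\<gamma> 1 = \<gamma> 0"
    using per[rule_format, of 0] by simp
  have "simple_path \<gamma>"
    unfolding simple_path_def loop_free_def path_def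
  proof (intro conjI ballI impI)
    show "continuous_on {0..1} \<gamma>"
      by (metis deriv continuous_at_imp_continuous_on has_vector_derivative_continuous)
  next
    fix x y :: real
    assume x: "x \<in> {0..1}" and y: "y \<in> {0..1}" and eq: "\<gamma> x = \<gamma> y"
    define x' where "x' = (if x = 1 then 0 else x)"
    define y' where "y' = (if y = 1 then 0 else y)"
    have "\<gamma> x' = \<gamma> y'" "x' \<in> {0..<1}" "y' \<in> {0..<1}"
      using eq loop x y by (auto simp: x'_def y'_def)
    then have "x' = y'"
      using inj by (meson inj_onD)
    then show "x = y \<or> x = 0 \<and> y = 1 \<or> x = 1 \<and> y = 0"
      using x y by (auto simp: x'_def y'_def split: if_splits)
  qed
  moreover have "pathfinish \<gamma> = pathstart \<gamma>"
    using loop by (simp add: pathfinish_def pathstart_def)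
  moreover have "path_image \<gamma> = F"
    using img by (simp add: path_image_def)
  ultimately show thesis
    using that by blast
qed

lemma C2_Jordan_curve_frontier_outside:
  assumes "C2_Jordan_curve F"
  shows "frontier (outside F) = F"
  using C2_Jordan_curve_imp_simple_loop[OF assms] Jordan_inside_outside by metis

lemma connected_subset_inside_or_outside:
  assumes "connected T" "T \<inter> S = {}"
  shows "T \<subseteq> inside S \<or> T \<subseteq> outside S"
  using inside_outside_intersect_connected[OF assms(1), of S] assms(2) inside_Un_outside
  by blast

lemma unbounded_connected_subset_outside:
  fixes S :: "'a::{real_normed_vector, perfect_space} set"
  assumes "bounded S" "connected T" "T \<inter> S = {}" "\<not> bounded T"
  shows "T \<subseteq> outside S"
  using connected_subset_inside_or_outside[OF assms(2,3)] bounded_inside[OF assms(1)]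
    assms(4) bounded_subset by blast

lemma subset_inside_imp_subset_outside:
  fixes P Q :: "'a::euclidean_space set"
  assumes "2 \<le> DIM('a)" "bounded P" "closed Q" "frontier (outside P) = P" "Q \<subseteq> inside P"
  shows "P \<subseteq> outside Q"
proof -
  have "bounded Q"
    using assms(2,5) bounded_inside bounded_subset by blast
  have "outside P \<subseteq> outside Q"
    using unbounded_connected_subset_outside[OF \<open>bounded Q\<close> connected_outside[OF assms(2,1)]
        _ unbounded_outside[OF assms(2)]] assms(5) inside_Int_outside by blast
  then have "P \<subseteq> closure (outside Q)"
    using assms(4) closure_mono unfolding frontier_def by blast
  then show ?thesis
    using closure_outside_subset[OF assms(3)] assms(5) inside_no_overlap by blast
qed

lemma frontier_component_enclosing:
  fixes S :: "'a::euclidean_space set"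
  assumes "2 \<le> DIM('a)" "open S" "connected S" "bounded S" "S \<noteq> {}"
  shows "\<exists>F\<in>components (frontier S). S \<subseteq> inside F"
proof -
  define X where "X = outside (closure S)"
  have frontier_S: "frontier S = closure S - S"
    using assms(2) by (simp add: frontier_def interior_open)
  have bounded_closure_S: "bounded (closure S)"
    using assms(4) by (rule bounded_closure)
  have X_conn: "connected X" and X_unbounded: "\<not> bounded X" and X_ne: "X \<noteq> {}"
    using connected_outside[OF bounded_closure_S assms(1)] unbounded_outside[OF bounded_closure_S]
    by (auto simp: X_def)
  have X_disj: "X \<inter> closure S = {}"
    using outside_no_overlap by (auto simp: X_def)
  then have "S \<inter> X = {}"
    using closure_subset by blast
  then have "S \<inter> closure X = {}"
    using assms(2) by (simp add: open_Int_closure_eq_empty)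
  moreover have "frontier X \<subseteq> closure S \<inter> closure X"
    using frontier_outside_subset[OF closed_closure, of S] unfolding X_def frontier_def by blast
  ultimately have frontier_X: "frontier X \<subseteq> frontier S"
    using frontier_S by blast
  have "X \<in> components (- closure S)"
    using X_conn X_ne by (simp add: X_def outside_in_components)
  then have "connected (frontier X)"
    using connected_frontier_component_complement connected_imp_connected_closure[OF assms(3)]
    by blast
  moreover have "X \<noteq> UNIV"
    using X_disj assms(5) closure_subset by blast
  then have "frontier X \<noteq> {}"
    using frontier_not_empty[OF X_ne] by blast
  ultimately obtain F where F: "F \<in> components (frontier S)" "frontier X \<subseteq> F"
    using exists_component_superset[OF frontier_X] frontier_X by blast
  have F_frontier: "F \<subseteq> frontier S"
    using F(1) in_components_subset by blast
  have "\<not> S \<subseteq> outside F"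
  proof
    assume S_out: "S \<subseteq> outside F"
    have "F \<subseteq> closure S"
      using F_frontier unfolding frontier_def by blast
    then have "bounded F"
      using bounded_closure_S bounded_subset by blast
    have "X \<subseteq> outside F"
      using unbounded_connected_subset_outside[OF \<open>bounded F\<close> X_conn _ X_unbounded]
        X_disj \<open>F \<subseteq> closure S\<close> by blast
    moreover have "outside F \<inter> frontier X = {}"
      using F(2) outside_no_overlap by blast
    moreover have "outside F \<inter> X \<noteq> {}"
      using \<open>X \<subseteq> outside F\<close> X_ne by blast
    ultimately have "outside F \<subseteq> X"
      using connected_Int_frontier[OF connected_outside[OF \<open>bounded F\<close> assms(1)], of X]
      by blast
    then show False
      using S_out X_disj assms(5) closure_subset by blast
  qed
  moreover have "S \<inter> F = {}"
    using F_frontier frontier_S by blast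
  ultimately show ?thesis
    using connected_subset_inside_or_outside[OF assms(3)] F(1) by blast
qed

lemma frontier_component_enclosing_unique:
  fixes S :: "'a::euclidean_space set"
  assumes "2 \<le> DIM('a)" "bounded S"
    and P: "P \<in> components (frontier S)" "frontier (outside P) = P" "S \<subseteq> inside P"
    and Q: "Q \<in> components (frontier S)" "S \<subseteq> inside Q"
  shows "P = Q"
proof (rule ccontr)
  assume "P \<noteq> Q"
  then have PQ: "P \<inter> Q = {}"
    using components_nonoverlap P(1) Q(1) by blast
  have closed: "closed C" and sub_closure: "C \<subseteq> closure S"
    if "C \<in> components (frontier S)" for C
    using closed_components[OF frontier_closed that] in_components_subset[OF that]
    unfolding frontier_def by blast+
  have enclosed: "C \<subseteq> inside B"
    if "B \<in> components (frontier S)" "C \<in> components (frontier S)" "S \<subseteq> inside B" "B \<inter> C = {}"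
    for B C
  proof -
    have "C \<subseteq> closure (inside B)"
      using sub_closure[OF that(2)] closure_mono[OF that(3)] by blast
    then show ?thesis
      using closure_inside_subset[OF closed[OF that(1)]] that(4) by blast
  qed
  have "bounded P"
    using sub_closure[OF P(1)] assms(2) bounded_closure bounded_subset by blast
  have "P \<subseteq> outside Q"
    using subset_inside_imp_subset_outside[OF assms(1) \<open>bounded P\<close> closed[OF Q(1)] P(2)]
      enclosed[OF P(1) Q(1) P(3) PQ] by blast
  moreover have "P \<subseteq> inside Q"
    using enclosed[OF Q(1) P(1) Q(2)] PQ by blast
  ultimately show False
    using in_components_nonempty[OF P(1)] inside_Int_outside by blast
qed

theorem lemma6p1:
  fixes \<Omega> :: "complex set" and A \<alpha> c :: real and u :: "complex \<Rightarrow> real"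
    and D U U\<^sub>1 :: "complex set"
  assumes dom: "lipschitz_domain \<Omega>"
    and A: "0 < A" "A < measure lebesgue \<Omega>"
    and alpha: "0 < \<alpha>" "\<alpha> < lam \<Omega> \<alpha> A"
    and minc: "minimizing_configuration \<Omega> \<alpha> A u D"
    and cont: "continuous_on \<Omega> u"
    and pos: "\<forall>x\<in>\<Omega>. 0 < u x"
    and c: "0 < c" "(D - {x\<in>\<Omega>. u x < c}) \<union> ({x\<in>\<Omega>. u x < c} - D) \<in> null_sets lebesgue"
    and U: "U = {x\<in>\<Omega>. u x > c}"
    and U1: "U\<^sub>1 \<in> components U"
    and grad: "\<forall>x\<in>frontier U\<^sub>1. \<exists>d. d \<noteq> 0 \<and> (u has_derivative (\<lambda>h. d \<bullet> h)) (at x)"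
    and jordan: "\<forall>F\<in>components (frontier U\<^sub>1). C2_Jordan_curve F"
  shows "\<exists>!F. F \<in> components (frontier U\<^sub>1) \<and> U\<^sub>1 \<subseteq> inside F"
proof -
  have \<Omega>: "open \<Omega>" "bounded \<Omega>"
    using dom by (auto simp: lipschitz_domain_def)
  have "open U"
    using continuous_open_preimage[OF cont \<Omega>(1), of "{c<..}"] U by (simp add: Int_def)
  then have "open U\<^sub>1"
    using U1 open_components by blast
  moreover have "bounded U\<^sub>1"
    using in_components_subset[OF U1] U \<Omega>(2) bounded_subset by blast
  moreover have "connected U\<^sub>1" "U\<^sub>1 \<noteq> {}"
    using U1 in_components_connected in_components_nonempty by auto
  ultimately obtain F where F: "F \<in> components (frontier U\<^sub>1)" "U\<^sub>1 \<subseteq> inside F"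
    using frontier_component_enclosing[of U\<^sub>1] by auto
  show ?thesis
  proof (rule ex1I[of _ F])
    fix G assume "G \<in> components (frontier U\<^sub>1) \<and> U\<^sub>1 \<subseteq> inside G"
    then show "G = F"
      using frontier_component_enclosing_unique[OF _ \<open>bounded U\<^sub>1\<close>] F jordan
        C2_Jordan_curve_frontier_outside by simp
  qed (use F in blast)
qed

end
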